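(* Let $n$ be even, let $d\ge3$ be odd, and let $r$ be a positive integer with $r(r-1)<n$. Fix a coordinate direction $k\in\{1,\dots,d-1\}$ and $r$ consecutive values $j,j+1,\dots,j+r-1$ of that coordinate. Let $P\in\Lambda_1(d,n)$ be such that the Latin hypercube $\mathcal H(P)$ agrees with $C_{d-1,n}$ at every cell whose $k$-th coordinate is not among $j,\dots,j+r-1$ (i.e. it agrees with $C_{d-1,n}$ outside these $r$ consecutive hyperplanes). Then $\operatorname{Per}(P)=0$. Furthermore, if $P_1,\dots,P_m\in\Lambda_1(d,n)$ all have this property (for the same fixed $r$ hyperplanes), then every linear combination $a_1P_1+\cdots+a_mP_m$ has permanent $0$.
   Context: Let $I_n=\{1,\dots,n\}$. A $d$-dimensional matrix of order $n$ is a function $I_n^d\to\mathbb R$. A diagonal is a selection of $n$ positions of $I_n^d$ any two of which differ in every coordinate; the permanent $\operatorname{Per}(A)$ is the sum over all diagonals of the product of the entries of $A$ at those positions. A line is the set of positions obtained by varying one coordinate and fixing the others. $\Lambda_1(d,n)$ is the set of $(0,1)$-valued $d$-dimensional matrices of order $n$ with exactly one $1$ in each line. A Latin hypercube of dimension $m$ and order $n$ is a function $H:I_n^m\to I_n$ in which every line contains each symbol exactly once. For $P\in\Lambda_1(d,n)$, $\mathcal H(P)$ is the Latin hypercube of dimension $d-1$ with $\mathcal H(P)(i_1,\dots,i_{d-1})=i_d$ iff $P(i_1,\dots,i_d)=1$. The cyclic Latin hypercube $C_{m,n}$ is defined by $C_{m,n}(x_1,\dots,x_m)\equiv x_1+\cdots+x_m\pmod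 n$, with value taken in $I_n$. A hyperplane of $\mathcal H(P)$ is the set of cells with one coordinate fixed. *)

theory Defs
  imports Complex_Main
begin

text \<open>Positions of \<open>I_n^d\<close>: functions on coordinates \<open>1..d\<close> with values in \<open>1..n\<close>,
  normalised to 0 outside the coordinate range.\<close>
definition positions :: "nat \<Rightarrow> nat \<Rightarrow> (nat \<Rightarrow> nat) set" where
  "positions d n = {x. (\<forall>i\<in>{1..d}. x i \<in> {1..n}) \<and> (\<forall>i. i \<notin> {1..d} \<longrightarrow> x i = 0)}"

type_synonym matrix = "(nat \<Rightarrow> nat) \<Rightarrow> real"

definition is_diagonal :: "nat \<Rightarrow> nat \<Rightarrow> (nat \<Rightarrow> nat) set \<Rightarrow> bool" where
  "is_diagonal d n D \<longleftrightarrow> D \<subseteq> positions d n \<and> card D = n \<and>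
     (\<forall>x\<in>D. \<forall>y\<in>D. x \<noteq> y \<longrightarrow> (\<forall>i\<in>{1..d}. x i \<noteq> y i))"

definition diagonals :: "nat \<Rightarrow> nat \<Rightarrow> (nat \<Rightarrow> nat) set set" where
  "diagonals d n = {D. is_diagonal d n D}"

definition Per :: "nat \<Rightarrow> nat \<Rightarrow> matrix \<Rightarrow> real" where
  "Per d n A = (\<Sum>D\<in>diagonals d n. \<Prod>x\<in>D. A x)"

definition line :: "nat \<Rightarrow> (nat \<Rightarrow> nat) \<Rightarrow> nat \<Rightarrow> (nat \<Rightarrow> nat) set" where
  "line n x i = {x(i := t) | t. t \<in> {1..n}}"

definition Lambda1 :: "nat \<Rightarrow> nat \<Rightarrow> matrix set" where
  "Lambda1 d n = {A. (\<forall>x\<in>positions d n. A x = 0 \<or> A x = 1) \<and>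
     (\<forall>x\<in>positions d n. \<forall>i\<in>{1..d}. card {y\<in>line n x i. A y = 1} = 1)}"

text \<open>The Latin hypercube \<open>\<H>(P)\<close> of dimension \<open>d-1\<close>: cells are positions of \<open>I_n^{d-1}\<close>.\<close>
definition hyp_of :: "nat \<Rightarrow> nat \<Rightarrow> matrix \<Rightarrow> (nat \<Rightarrow> nat) \<Rightarrow> nat" where
  "hyp_of d n P x = (THE t. t \<in> {1..n} \<and> P (x(d := t)) = 1)"

definition cyclic :: "nat \<Rightarrow> nat \<Rightarrow> (nat \<Rightarrow> nat) \<Rightarrow> nat" where
  "cyclic m n x = (THE c. c \<in> {1..n} \<and> c mod n = (\<Sum>i=1..m. x i) mod n)"

definition agrees_outside :: "nat \<Rightarrow> nat \<Rightarrow> nat \<Rightarrow> nat \<Rightarrow> nat \<Rightarrow> matrix \<Rightarrow> bool" where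
  "agrees_outside d n k j r P \<longleftrightarrow>
     (\<forall>x\<in>positions (d - 1) n. x k \<notin> {j..j + r - 1} \<longrightarrow> hyp_of d n P x = cyclic (d - 1) n x)"

end

(*
  Let J = {j, ..., j+r-1}. If P has a 1 at position x and x_k is not in J, then
  x_d = x_1 + ... + x_{d-1} (mod n). If x_k is in J, the k-line of H(P) through
  (x_1, ..., x_{d-1}) already carries every symbol x_1 + ... + x_{d-1} - x_k + t with t not in J
  at its cells outside J, so x_d = x_1 + ... + x_{d-1} - x_k + c (mod n) for some c in J.
  Summing over a diagonal D, on which every coordinate runs through 1..n, gives
  G = (d - 1) G + e (mod n) with G = n(n+1)/2 and e the sum of c - x_k over the r positions of D
  with x_k in J, so 2|e| <= r(r-1) < n. As n is even and d - 2 is odd, (d - 2) G = n/2 (mod n),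
  hence n/2 + e = 0 (mod n), which is impossible. The position of D violating the congruences
  depends on D alone, so it is a zero of all the P_i at once, which handles linear combinations.
*)
theory Submission
  imports Defs "HOL-Number_Theory.Cong"
begin

lemma Lambda1_line_unique:
  assumes P: "P \<in> Lambda1 d n" and x: "x \<in> positions d n" and i: "i \<in> {1..d}"
    and s: "s \<in> {1..n}" and t: "t \<in> {1..n}"
    and Ps: "P (x(i := s)) = 1" and Pt: "P (x(i := t)) = 1"
  shows "s = t"
proof -
  have "card {y \<in> line n x i. P y = 1} = 1" using P x i unfolding Lambda1_def by blast
  then obtain z where z: "{y \<in> line n x i. P y = 1} = {z}" using card_1_singletonE by blast
  have "x(i := s) \<in> {y \<in> line n x i. P y = 1}" "x(i := t) \<in> {y \<in> line n x i. P y = 1}"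
    using s t Ps Pt unfolding line_def by blast+
  then have "x(i := s) = x(i := t)" using z by auto
  then show ?thesis by (metis fun_upd_same)
qed

lemma Lambda1_line_exists:
  assumes "P \<in> Lambda1 d n" and "x \<in> positions d n" and "i \<in> {1..d}"
  shows "\<exists>t\<in>{1..n}. P (x(i := t)) = 1"
proof -
  have "card {y \<in> line n x i. P y = 1} = 1" using assms unfolding Lambda1_def by blast
  then obtain z where "{y \<in> line n x i. P y = 1} = {z}" using card_1_singletonE by blast
  then have "z \<in> line n x i" "P z = 1" by auto
  then show ?thesis unfolding line_def by auto
qed

lemma positions_fun_upd:
  "x \<in> positions d n \<Longrightarrow> i \<in> {1..d} \<Longrightarrow> t \<in> {1..n} \<Longrightarrow> x(i := t) \<in> positions d n"
  unfolding positions_def by auto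

lemma positions_extend:
  "y \<in> positions (d - 1) n \<Longrightarrow> d \<ge> 1 \<Longrightarrow> t \<in> {1..n} \<Longrightarrow> y(d := t) \<in> positions d n"
  unfolding positions_def by (auto simp: le_diff_conv)

lemma positions_restrict:
  "x \<in> positions d n \<Longrightarrow> x(d := 0) \<in> positions (d - 1) n"
  unfolding positions_def by (cases "d = 0") auto

lemma hyp_of_eq_iff:
  assumes P: "P \<in> Lambda1 d n" and y: "y \<in> positions (d - 1) n" and d: "d \<ge> 1"
    and t: "t \<in> {1..n}"
  shows "hyp_of d n P y = t \<longleftrightarrow> P (y(d := t)) = 1"
proof -
  have yt: "y(d := t) \<in> positions d n" using positions_extend[OF y d t] .
  obtain s where s: "s \<in> {1..n}" "P (y(d := s)) = 1"
    using Lambda1_line_exists[OF P yt, of d] d by auto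
  have unique: "u = s" if "u \<in> {1..n}" "P (y(d := u)) = 1" for u
    using Lambda1_line_unique[OF P yt, of d u s] that s d by simp
  have hyp: "hyp_of d n P y = s"
    unfolding hyp_of_def by (rule the_equality) (use s unique in blast)+
  show ?thesis
  proof
    assume "hyp_of d n P y = t"
    then show "P (y(d := t)) = 1" using hyp s by simp
  next
    assume "P (y(d := t)) = 1"
    then show "hyp_of d n P y = t" using hyp unique t by blast
  qed
qed

lemma cong_atLeastAtMost_imp_eq:
  fixes a b n :: nat
  assumes "a \<in> {1..n}" "b \<in> {1..n}" "[a = b] (mod n)"
  shows "a = b"
proof -
  have "[a - 1 = b - 1] (mod n)" using assms cong_diff_nat[of a b n 1 1] by simp
  then have "a - 1 = b - 1" using assms by (intro cong_less_imp_eq_nat) auto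
  then show ?thesis using assms(1,2) by auto
qed

lemma ex_cong_atLeastAtMost:
  fixes a :: int
  assumes "n > 0"
  shows "\<exists>t\<in>{1..n}. [int t = a] (mod int n)"
proof
  let ?t = "nat ((a - 1) mod int n) + 1"
  have "0 \<le> (a - 1) mod int n" "(a - 1) mod int n < int n" using assms by simp_all
  then show "?t \<in> {1..n}" by (auto simp: nat_less_iff)
  have "int ?t = (a - 1) mod int n + 1" using assms by simp
  also have "[\<dots> = (a - 1) + 1] (mod int n)" by (rule cong_add) simp_all
  finally show "[int ?t = a] (mod int n)" by (simp only: diff_add_cancel)
qed

lemma cyclic_eq_iff:
  assumes c: "c \<in> {1..n}"
  shows "cyclic m n x = c \<longleftrightarrow> [int c = (\<Sum>i=1..m. int (x i))] (mod int n)"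
proof -
  let ?s = "\<Sum>i=1..m. x i"
  have int_cong_iff: "[int b = (\<Sum>i=1..m. int (x i))] (mod int n) \<longleftrightarrow> [b = ?s] (mod n)" for b
    by (simp add: cong_int_iff flip: of_nat_sum)
  obtain c0 where c0: "c0 \<in> {1..n}" "[c0 = ?s] (mod n)"
    using ex_cong_atLeastAtMost[of n "\<Sum>i=1..m. int (x i)"] c int_cong_iff by auto
  have "cyclic m n x = c0"
    unfolding cyclic_def
  proof (rule the_equality)
    show "c0 \<in> {1..n} \<and> c0 mod n = ?s mod n" using c0 unfolding cong_def by blast
    fix b assume "b \<in> {1..n} \<and> b mod n = ?s mod n"
    then show "b = c0" using c0 cong_atLeastAtMost_imp_eq[of b n c0] unfolding cong_def by simp
  qed
  moreover have "c0 = c \<longleftrightarrow> [c = ?s] (mod n)"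
    using c0 c cong_atLeastAtMost_imp_eq[of c n c0] unfolding cong_def by auto
  ultimately show ?thesis using int_cong_iff by simp
qed

lemma sum_fun_upd:
  fixes f :: "'a \<Rightarrow> 'b::ab_group_add"
  assumes "finite A" and "k \<in> A"
  shows "sum (f(k := t)) A = sum f A - f k + t"
proof -
  have "sum (f(k := t)) A = t + sum (f(k := t)) (A - {k})" using assms by (simp add: sum.remove)
  also have "sum (f(k := t)) (A - {k}) = sum f (A - {k})" by (rule sum.cong) auto
  also have "\<dots> = sum f A - f k" using assms by (simp add: sum_diff1)
  finally show ?thesis by (simp add: algebra_simps)
qed

lemma agrees_outside_one_iff_cong:
  assumes P: "P \<in> Lambda1 d n" and agree: "agrees_outside d n k j r P"
    and k: "k \<in> {1..d - 1}" and x: "x \<in> positions d n" and x_out: "x k \<notin> {j..j + r - 1}"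
  shows "P x = 1 \<longleftrightarrow> [int (x d) = (\<Sum>i=1..d-1. int (x i))] (mod int n)"
proof -
  define y where "y = x(d := 0)"
  have d: "d \<ge> 1" using k by (cases d) auto
  have y: "y \<in> positions (d - 1) n" unfolding y_def using positions_restrict[OF x] .
  have xd: "x d \<in> {1..n}" using x d unfolding positions_def by auto
  have "P x = 1 \<longleftrightarrow> hyp_of d n P y = x d" using hyp_of_eq_iff[OF P y d xd] by (simp add: y_def)
  also have "hyp_of d n P y = cyclic (d - 1) n y"
    using agree y x_out k unfolding agrees_outside_def y_def by auto
  also have "cyclic (d - 1) n y = x d \<longleftrightarrow> [int (x d) = (\<Sum>i=1..d-1. int (y i))] (mod int n)"
    by (rule cyclic_eq_iff[OF xd])
  also have "(\<Sum>i=1..d-1. int (y i)) = (\<Sum>i=1..d-1. int (x i))"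
    unfolding y_def by (rule sum.cong) auto
  finally show ?thesis .
qed

definition shifted_cyclic :: "nat \<Rightarrow> nat \<Rightarrow> nat \<Rightarrow> nat set \<Rightarrow> (nat \<Rightarrow> nat) \<Rightarrow> bool" where
  "shifted_cyclic d n k J x \<longleftrightarrow>
     (\<exists>c. (if x k \<in> J then c \<in> J else c = x k) \<and>
          [int (x d) = (\<Sum>i=1..d-1. int (x i)) - int (x k) + int c] (mod int n))"

lemma shifted_cyclic_if_agrees_outside:
  assumes P: "P \<in> Lambda1 d n" and agree: "agrees_outside d n k j r P"
    and k: "k \<in> {1..d - 1}" and x: "x \<in> positions d n" and Px: "P x = 1"
  shows "shifted_cyclic d n k {j..j + r - 1} x"
proof (cases "x k \<in> {j..j + r - 1}")
  case False
  then show ?thesis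
    using agrees_outside_one_iff_cong[OF P agree k x False] Px
    unfolding shifted_cyclic_def by auto
next
  case True
  define S where "S = (\<Sum>i=1..d-1. int (x i))"
  have xd: "x d \<in> {1..n}" and xk: "x k \<in> {1..n}" using x k unfolding positions_def by auto
  obtain t where t: "t \<in> {1..n}" "[int t = int (x d) - S + int (x k)] (mod int n)"
    using ex_cong_atLeastAtMost[of n "int (x d) - S + int (x k)"] xd by auto
  have "[S - int (x k) + int t = S - int (x k) + (int (x d) - S + int (x k))] (mod int n)"
    using t(2) by (intro cong_add) auto
  then have xd_cong: "[int (x d) = S - int (x k) + int t] (mod int n)" by (simp add: cong_sym_eq)
  have "t \<in> {j..j + r - 1}"
  proof (rule ccontr)
    \<comment> \<open>Otherwise the cyclic part of H(P) puts a second 1 on the k-line through x.\<close>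
    assume t_out: "t \<notin> {j..j + r - 1}"
    have xt: "x(k := t) \<in> positions d n" using positions_fun_upd[OF x _ t(1)] k by auto
    have "(\<Sum>i=1..d-1. int ((x(k := t)) i)) = S - int (x k) + int t"
      using sum_fun_upd[of "{1..d-1}" k "\<lambda>i. int (x i)" "int t"] k
      by (simp add: S_def fun_upd_def if_distrib cong: if_cong)
    then have "P (x(k := t)) = 1"
      using agrees_outside_one_iff_cong[OF P agree k xt] t_out xd_cong k by auto
    then have "t = x k" using Lambda1_line_unique[OF P x _ t(1) xk, of k] k Px by fastforce
    then show False using t_out True by simp
  qed
  then show ?thesis using True xd_cong unfolding shifted_cyclic_def S_def by auto
qed

lemma diagonal_coord_bij:
  assumes D: "is_diagonal d n D" and i: "i \<in> {1..d}"
  shows "bij_betw (\<lambda>x. x i) D {1..n}"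
proof -
  have inj: "inj_on (\<lambda>x. x i) D" using D i unfolding is_diagonal_def inj_on_def by blast
  have "(\<lambda>x. x i) ` D \<subseteq> {1..n}" using D i unfolding is_diagonal_def positions_def by auto
  moreover have "card ((\<lambda>x. x i) ` D) = n" using D inj card_image unfolding is_diagonal_def by metis
  ultimately have "(\<lambda>x. x i) ` D = {1..n}" by (simp add: card_subset_eq)
  then show ?thesis using inj unfolding bij_betw_def by simp
qed

lemma double_sum_atLeastLessThan:
  "2 * (\<Sum>t\<in>{j..<j + r}. int t) = int r * (2 * int j + int r - 1)"
proof (induction r)
  case (Suc r)
  have "{j..<j + Suc r} = insert (j + r) {j..<j + r}" by auto
  then show ?case using Suc by (simp add: algebra_simps)
qed simp

lemma sum_deviation_atLeastLessThan:
  fixes f g :: "'a \<Rightarrow> nat"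
  assumes g: "bij_betw g R {j..<j + r}" and f: "f ` R \<subseteq> {j..<j + r}"
  shows "2 * \<bar>\<Sum>x\<in>R. int (f x) - int (g x)\<bar> \<le> int r * (int r - 1)"
proof -
  define F where "F = (\<Sum>x\<in>R. int (f x))"
  define G where "G = (\<Sum>x\<in>R. int (g x))"
  have card: "card R = r" using bij_betw_same_card[OF g] by simp
  have "2 * G = int r * (2 * int j + int r - 1)"
    unfolding G_def using sum.reindex_bij_betw[OF g, of int] double_sum_atLeastLessThan by simp
  then have G: "2 * G = 2 * (int r * int j) + int r * int r - int r" by (simp add: algebra_simps)
  have f_bounds: "int j \<le> int (f x)" "int (f x) \<le> int j + int r - 1" if "x \<in> R" for x
    using f that by auto
  have "int r * int j \<le> F"
    unfolding F_def using sum_bounded_below[of R "int j" "\<lambda>x. int (f x)"] f_bounds card by simp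
  moreover have "F \<le> int r * int j + int r * int r - int r"
    unfolding F_def using sum_bounded_above[of R "\<lambda>x. int (f x)" "int j + int r - 1"] f_bounds card
    by (simp add: algebra_simps)
  ultimately have "2 * \<bar>F - G\<bar> \<le> int r * int r - int r" using G by arith
  then show ?thesis by (simp add: F_def G_def sum_subtractf algebra_simps)
qed

lemma odd_multiple_triangular_not_cong:
  fixes n q :: nat and e :: int
  assumes n: "even n" and q: "odd q" and e: "2 * \<bar>e\<bar> < int n"
  shows "\<not> [int q * (\<Sum>t=1..n. int t) + e = 0] (mod int n)"
proof
  obtain h where h: "n = 2 * h" using n by blast
  obtain p where p: "q = 2 * p + 1" using q oddE by blast
  have "2 * (\<Sum>t=1..n. int t) = int n * (int n + 1)"
    using double_gauss_sum_from_Suc_0[of n] by simp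
  then have split: "int q * (\<Sum>t=1..n. int t) + e = (int h + e) + int n * ((2 * int p + 1) * int h + int p)"
    using h p by (simp add: algebra_simps)
  assume "[int q * (\<Sum>t=1..n. int t) + e = 0] (mod int n)"
  then have "int n dvd (int h + e) + int n * ((2 * int p + 1) * int h + int p)"
    unfolding cong_0_iff split .
  then have "int n dvd int h + e" by (metis dvd_add_left_iff dvd_triv_left)
  moreover have "0 < int h + e" "int h + e < int n" using e h by auto
  ultimately show False using zdvd_imp_le by fastforce
qed

lemma diagonal_coord_bij_preimage:
  assumes D: "is_diagonal d n D" and i: "i \<in> {1..d}" and J: "J \<subseteq> {1..n}"
  shows "bij_betw (\<lambda>x. x i) {x \<in> D. x i \<in> J} J"
proof (rule bij_betw_subset[OF diagonal_coord_bij[OF D i]])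
  show "(\<lambda>x. x i) ` {x \<in> D. x i \<in> J} = J"
    using diagonal_coord_bij[OF D i] J unfolding bij_betw_def by auto
qed auto

lemma diagonal_shift_sum_cong:
  assumes D: "is_diagonal d n D" and k: "k \<in> {1..d - 1}"
    and c: "\<And>x. x \<in> D \<Longrightarrow>
      [int (x d) = (\<Sum>i=1..d-1. int (x i)) - int (x k) + int (c x)] (mod int n)"
  shows "[int (d - 2) * (\<Sum>t=1..n. int t) + (\<Sum>x\<in>D. int (c x) - int (x k)) = 0] (mod int n)"
proof -
  let ?G = "\<Sum>t=1..n. int t" and ?e = "\<Sum>x\<in>D. int (c x) - int (x k)"
  have d: "d \<ge> 2" using k by (cases d) auto
  have column_sum: "(\<Sum>x\<in>D. int (x i)) = ?G" if "i \<in> {1..d}" for i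
    using sum.reindex_bij_betw[OF diagonal_coord_bij[OF D that], of int] by simp
  have "?G = (\<Sum>x\<in>D. int (x d))" using column_sum[of d] d by simp
  also have "[\<dots> = (\<Sum>x\<in>D. (\<Sum>i=1..d-1. int (x i)) - int (x k) + int (c x))] (mod int n)"
    by (rule cong_sum) (rule c)
  finally have "[?G = (\<Sum>i=1..d-1. \<Sum>x\<in>D. int (x i)) + ?e] (mod int n)"
    by (simp add: sum.distrib sum_subtractf sum.swap[of _ D] algebra_simps)
  also have "(\<Sum>i=1..d-1. \<Sum>x\<in>D. int (x i)) = (\<Sum>i=1..d-1. ?G)"
    using column_sum by (intro sum.cong) auto
  finally have "int n dvd (int (d - 1) * ?G + ?e) - ?G"
    by (simp add: cong_iff_dvd_diff dvd_diff_commute)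
  also have "int (d - 1) * ?G + ?e - ?G = int (d - 2) * ?G + ?e"
    using d by (simp add: of_nat_diff algebra_simps)
  finally show ?thesis by (simp only: cong_0_iff)
qed

lemma diagonal_not_all_shifted_cyclic:
  assumes D: "is_diagonal d n D" and n: "even n" and d: "odd d" and k: "k \<in> {1..d - 1}"
    and J: "{j..<j + r} \<subseteq> {1..n}" and r: "r * (r - 1) < n"
  shows "\<exists>x\<in>D. \<not> shifted_cyclic d n k {j..<j + r} x"
proof (rule ccontr)
  let ?J = "{j..<j + r}"
  assume "\<not> ?thesis"
  then obtain c where c_in: "\<And>x. x \<in> D \<Longrightarrow> (if x k \<in> ?J then c x \<in> ?J else c x = x k)"
    and c_cong: "\<And>x. x \<in> D \<Longrightarrow>
      [int (x d) = (\<Sum>i=1..d-1. int (x i)) - int (x k) + int (c x)] (mod int n)"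
    unfolding shifted_cyclic_def by metis
  define R where "R = {x \<in> D. x k \<in> ?J}"
  define e where "e = (\<Sum>x\<in>R. int (c x) - int (x k))"
  have "finite D" using D r unfolding is_diagonal_def by (simp add: card_ge_0_finite)
  then have "(\<Sum>x\<in>D. int (c x) - int (x k)) = e"
    unfolding e_def R_def using c_in by (intro sum.mono_neutral_right) auto
  then have "[int (d - 2) * (\<Sum>t=1..n. int t) + e = 0] (mod int n)"
    using diagonal_shift_sum_cong[OF D k c_cong] by simp
  moreover have "2 * \<bar>e\<bar> < int n"
  proof -
    have "bij_betw (\<lambda>x. x k) R ?J"
      unfolding R_def using diagonal_coord_bij_preimage[OF D _ J, of k] k by auto
    moreover have "c ` R \<subseteq> ?J" using c_in unfolding R_def by fastforce
    ultimately have "2 * \<bar>e\<bar> \<le> int r * (int r - 1)"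
      unfolding e_def by (rule sum_deviation_atLeastLessThan)
    also have "\<dots> = int (r * (r - 1))" by (cases r) (simp_all add: algebra_simps)
    also have "\<dots> < int n" using r by (simp only: of_nat_less_iff)
    finally show ?thesis .
  qed
  moreover have "odd (d - 2)" using d k by (cases d) auto
  ultimately show False using odd_multiple_triangular_not_cong[OF n] by blast
qed

lemma Per_eq_0_if_diagonals_meet_zero:
  assumes n: "n > 0" and zero: "\<And>D. is_diagonal d n D \<Longrightarrow> \<exists>x\<in>D. A x = 0"
  shows "Per d n A = 0"
  unfolding Per_def
proof (rule sum.neutral, rule ballI)
  fix D assume "D \<in> diagonals d n"
  then have D: "is_diagonal d n D" unfolding diagonals_def by simp
  then have "finite D" using n unfolding is_diagonal_def by (simp add: card_ge_0_finite)
  then show "(\<Prod>x\<in>D. A x) = 0" using zero[OF D] by simp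
qed

theorem theorem2p5:
  fixes n d r k j :: nat
  assumes "even n" and "odd d" and "d \<ge> 3"
    and "r > 0" and "r * (r - 1) < n"
    and "k \<in> {1..d - 1}" and "j \<ge> 1" and "j + r - 1 \<le> n"
  shows "(\<forall>P. P \<in> Lambda1 d n \<and> agrees_outside d n k j r P \<longrightarrow> Per d n P = 0) \<and>
         (\<forall>m (Ps :: nat \<Rightarrow> matrix) (a :: nat \<Rightarrow> real).
            (\<forall>i<m. Ps i \<in> Lambda1 d n \<and> agrees_outside d n k j r (Ps i)) \<longrightarrow>
            Per d n (\<lambda>x. \<Sum>i<m. a i * Ps i x) = 0)"
proof -
  have n: "n > 0" using assms(5) by simp
  have J: "{j..j + r - 1} = {j..<j + r}" and J_sub: "{j..<j + r} \<subseteq> {1..n}"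
    using assms(4,7,8) by auto
  have combination: "Per d n (\<lambda>x. \<Sum>i<m. a i * Ps i x) = 0"
    if Ps: "\<forall>i<m. Ps i \<in> Lambda1 d n \<and> agrees_outside d n k j r (Ps i)"
    for m and Ps :: "nat \<Rightarrow> matrix" and a :: "nat \<Rightarrow> real"
  proof (rule Per_eq_0_if_diagonals_meet_zero[OF n])
    fix D assume D: "is_diagonal d n D"
    then obtain x where x: "x \<in> D" and not_shifted: "\<not> shifted_cyclic d n k {j..<j + r} x"
      using diagonal_not_all_shifted_cyclic[OF D assms(1,2,6) J_sub assms(5)] by blast
    have "x \<in> positions d n" using D x unfolding is_diagonal_def by auto
    then have "Ps i x = 0" if "i < m" for i
      using shifted_cyclic_if_agrees_outside[of "Ps i" d n k j r x] Ps that not_shifted J assms(6)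
      unfolding Lambda1_def by auto
    then have "(\<Sum>i<m. a i * Ps i x) = 0" by simp
    then show "\<exists>x\<in>D. (\<Sum>i<m. a i * Ps i x) = 0" using x by blast
  qed
  show ?thesis
  proof (intro conjI allI impI)
    fix P assume "P \<in> Lambda1 d n \<and> agrees_outside d n k j r P"
    then show "Per d n P = 0" using combination[of 1 "\<lambda>_. P" "\<lambda>_. 1"] by simp
  qed (use combination in blast)
qed

end
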